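(* Suppose $\{L_t : t\in[0,1]\}$ is a continuous family of oriented lines in $\mathbb{R}^3$ such that $L_1$ is the line $L_0$ with the opposite orientation. Then there exist parameters $r,s\in[0,1]$ such that $L_r$ and $L_s$ are perpendicular, intersecting lines.
   Context: An oriented line in $\mathbb{R}^3$ is a line together with a choice of one of its two unit direction vectors. Continuity of the family is understood in the space of oriented lines, e.g. via the direction vector $a_t$ and the moment vector $p_t\times a_t$ for any point $p_t\in L_t$ varying continuously in $t$. *)

theory Defs
  imports "HOL-Analysis.Analysis"
begin

text \<open>An oriented line in R^3 is represented by its Pluecker coordinates (a, m):
  a unit direction vector a and a moment vector m = p x a (p any point of the line),
  so that m is orthogonal to a.\<close>

definition oriented_line :: "real^3 \<Rightarrow> real^3 \<Rightarrow> bool" where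
  "oriented_line a m \<longleftrightarrow> norm a = 1 \<and> a \<bullet> m = 0"

definition line_points :: "real^3 \<Rightarrow> real^3 \<Rightarrow> (real^3) set" where
  "line_points a m = {p. cross3 p a = m}"

end

theory Submission imports Defs begin

text \<open>Pair the two lines by the dual-number inner product of their Pluecker coordinates,
  realised as the complex number \<open>F r s = a\<^sub>r \<bullet> a\<^sub>s + i (a\<^sub>r \<bullet> m\<^sub>s + a\<^sub>s \<bullet> m\<^sub>r)\<close>; it vanishes
  only for perpendicular intersecting lines.  If it never vanished on the square
  \<open>[0,1]\<^sup>2\<close>, it would have a continuous logarithm there.  On the diagonal \<open>F = 1\<close>, so the
  logarithm returns to its initial value from \<open>(0,0)\<close> to \<open>(1,1)\<close>.  Reversing \<open>L\<^sub>1\<close> gives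
  \<open>F t 1 = - F 0 t\<close>, so the logarithm changes by the same odd multiple of \<open>\<pi> i\<close> along
  both edges \<open>(0,0) \<rightarrow> (0,1)\<close> and \<open>(0,1) \<rightarrow> (1,1)\<close>, a total change of \<open>2\<pi> i\<close> times an odd
  number.\<close>

lemma cross3_cross3_left: "cross3 (cross3 x y) z = (x \<bullet> z) *\<^sub>R y - (y \<bullet> z) *\<^sub>R x"
  by (simp add: cross3_simps forall_3)

lemma orthonormal_cross3_expansion:
  fixes a b x :: "real^3"
  assumes "norm a = 1" "norm b = 1" "a \<bullet> b = 0"
  shows "x = (x \<bullet> a) *\<^sub>R a + (x \<bullet> b) *\<^sub>R b + (x \<bullet> cross3 a b) *\<^sub>R cross3 a b"
proof -
  define c where "c = cross3 a b"
  define y where "y = x - (x \<bullet> a) *\<^sub>R a - (x \<bullet> b) *\<^sub>R b - (x \<bullet> c) *\<^sub>R c"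
  have aa: "a \<bullet> a = 1" and bb: "b \<bullet> b = 1"
    using assms(1,2) by (simp_all add: dot_square_norm)
  have cc: "c \<bullet> c = 1"
    using aa bb assms(3) by (simp add: c_def dot_cross inner_commute)
  have ca: "c \<bullet> a = 0" and cb: "c \<bullet> b = 0"
    by (simp_all add: c_def dot_cross_self)
  have "a \<bullet> y = 0" "b \<bullet> y = 0" "c \<bullet> y = 0"
    using aa bb cc ca cb assms(3)
    by (simp_all add: y_def inner_diff_right inner_commute)
  then have "c \<bullet> y = 0 \<and> cross3 c y = 0"
    by (simp add: c_def cross3_cross3_left)
  moreover have "c \<noteq> 0"
    using cc by auto
  ultimately have "y = 0"
    using norm_and_cross_eq_0 by blast
  then show ?thesis
    by (simp add: y_def c_def algebra_simps)
qed

lemma oriented_line_foot_in_line_points: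
  assumes "oriented_line a m"
  shows "cross3 a m \<in> line_points a m"
  using assms
  by (simp add: oriented_line_def line_points_def cross3_cross3_left dot_square_norm inner_commute)

lemma oriented_line_moment_unique:
  assumes "oriented_line a m" "line_points a m' = line_points a m"
  shows "m' = m"
  using oriented_line_foot_in_line_points[OF assms(1)] assms(2)
  by (auto simp: line_points_def)

lemma line_points_uminus: "line_points (- a) (- m) = line_points a m"
  by (simp add: line_points_def)

lemma perpendicular_oriented_lines_meet:
  assumes ab: "oriented_line a m" "oriented_line b n"
    and perp: "a \<bullet> b = 0" and moments: "a \<bullet> n + b \<bullet> m = 0"
  shows "line_points a m \<inter> line_points b n \<noteq> {}"
proof -
  have a: "norm a = 1" "a \<bullet> m = 0" and b: "norm b = 1" "b \<bullet> n = 0"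
    using ab by (simp_all add: oriented_line_def)
  define p where "p = cross3 a m + (n \<bullet> cross3 a b) *\<^sub>R a"
  have on_first: "cross3 p a = m"
    using a by (simp add: p_def cross_add_left cross_mult_left cross3_cross3_left dot_square_norm inner_commute)
  have "m \<bullet> b = - (n \<bullet> a)"
    using moments by (simp add: inner_commute add_eq_0_iff)
  then have "cross3 p b = (n \<bullet> a) *\<^sub>R a + (n \<bullet> cross3 a b) *\<^sub>R cross3 a b"
    using perp by (simp add: p_def cross_add_left cross_mult_left cross3_cross3_left)
  also have "\<dots> = n"
    using orthonormal_cross3_expansion[OF a(1) b(1) perp, of n] b(2) by (simp add: inner_commute)
  finally show ?thesis
    using on_first by (auto simp: line_points_def)
qed

definition line_pairing :: "real^3 \<Rightarrow> real^3 \<Rightarrow> real^3 \<Rightarrow> real^3 \<Rightarrow> complex" where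
  "line_pairing a m b n = Complex (a \<bullet> b) (a \<bullet> n + b \<bullet> m)"

lemma line_pairing_commute: "line_pairing a m b n = line_pairing b n a m"
  by (simp add: line_pairing_def inner_commute add.commute)

lemma line_pairing_uminus_right: "line_pairing a m (- b) (- n) = - line_pairing a m b n"
  by (simp add: line_pairing_def complex_eq_iff)

lemma line_pairing_self: "oriented_line a m \<Longrightarrow> line_pairing a m a m = 1"
  by (simp add: oriented_line_def line_pairing_def dot_square_norm inner_commute complex_eq_iff)

lemma line_pairing_eq_0_imp_perpendicular_meet:
  assumes "oriented_line a m" "oriented_line b n" "line_pairing a m b n = 0"
  shows "a \<bullet> b = 0" "line_points a m \<inter> line_points b n \<noteq> {}"
  using assms perpendicular_oriented_lines_meet by (simp_all add: line_pairing_def complex_eq_iff)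

lemma exp_constant_imp_constant_on:
  fixes h :: "'a::topological_space \<Rightarrow> complex"
  assumes "connected S" "continuous_on S h" "\<And>z. z \<in> S \<Longrightarrow> exp (h z) = c"
  shows "h constant_on S"
proof (rule continuous_discrete_range_constant[OF assms(1,2)])
  fix x assume x: "x \<in> S"
  have "2 * pi \<le> norm (h y - h x)" if y: "y \<in> S" "h y \<noteq> h x" for y
  proof -
    have "exp (h y) = exp (h x)"
      using assms(3) x y by simp
    then obtain n :: int where n: "h y - h x = of_real (2 * pi * n) * \<i>"
      unfolding exp_eq by (auto simp: algebra_simps)
    with y have "n \<noteq> 0"
      by auto
    then have "1 \<le> \<bar>real_of_int n\<bar>"
      by linarith
    then have "2 * pi \<le> 2 * pi * \<bar>real_of_int n\<bar>"
      by simp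
    also have "\<dots> = norm (h y - h x)"
      by (simp add: n norm_mult abs_mult)
    finally show ?thesis .
  qed
  then show "\<exists>e>0. \<forall>y. y \<in> S \<and> h y \<noteq> h x \<longrightarrow> e \<le> norm (h y - h x)"
    by (metis pi_gt_zero zero_less_mult_iff zero_less_numeral)
qed

lemma square_antisymmetric_boundary_has_zero:
  fixes F :: "real \<times> real \<Rightarrow> complex"
  assumes contF: "continuous_on ({0..1} \<times> {0..1}) F"
    and diagonal: "\<And>t. t \<in> {0..1} \<Longrightarrow> F (t, t) = 1"
    and boundary: "\<And>t. t \<in> {0..1} \<Longrightarrow> F (t, 1) = - F (0, t)"
  shows "\<exists>z \<in> {0..1} \<times> {0..1}. F z = 0"
proof (rule ccontr)
  define S :: "(real \<times> real) set" where "S = {0..1} \<times> {0..1}"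
  assume "\<not> ?thesis"
  then have "\<And>z. z \<in> S \<Longrightarrow> F z \<noteq> 0"
    by (auto simp: S_def)
  moreover have "convex S"
    by (simp add: S_def convex_Times)
  ultimately obtain g where contg: "continuous_on S g" and g: "\<And>z. z \<in> S \<Longrightarrow> F z = exp (g z)"
    using continuous_logarithm_on_simply_connected contF convex_imp_simply_connected
      convex_imp_locally_path_connected unfolding S_def by metis
  have path_cont: "continuous_on {0..1} (\<lambda>t. g (p t))"
    if "continuous_on {0..1} p" "p ` {0..1} \<subseteq> S" for p
    using continuous_on_compose2[OF contg that(1) that(2)] .
  have "(\<lambda>t. g (t, t)) constant_on {0..1}"
    using g diagonal
    by (intro exp_constant_imp_constant_on[where c = 1] path_cont continuous_intros)
      (auto simp: S_def)
  then have diag_log: "g (1, 1) = g (0, 0)"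
    unfolding constant_on_def by (metis atLeastAtMost_iff order_refl zero_le_one)
  have "(\<lambda>t. g (t, 1) - g (0, t)) constant_on {0..1}"
  proof (rule exp_constant_imp_constant_on[where c = "-1"])
    show "continuous_on {0..1} (\<lambda>t. g (t, 1) - g (0, t))"
      by (intro path_cont continuous_intros) (auto simp: S_def)
    fix t :: real assume t: "t \<in> {0..1}"
    then have "exp (g (t, 1)) = - exp (g (0, t))" "exp (g (0, t)) \<noteq> 0"
      using g boundary by (auto simp: S_def)
    then show "exp (g (t, 1) - g (0, t)) = -1"
      by (simp add: exp_diff)
  qed simp
  then have edge_log: "g (1, 1) - g (0, 1) = g (0, 1) - g (0, 0)"
    unfolding constant_on_def by (metis atLeastAtMost_iff order_refl zero_le_one)
  define w where "w = g (0, 1) - g (0, 0)"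
  have "exp w = -1"
    using g[of "(0, 1)"] g[of "(0, 0)"] boundary[of 0] diagonal[of 0]
    by (simp add: w_def exp_diff S_def)
  moreover have "w = 0"
    using diag_log edge_log by (simp add: w_def)
  ultimately show False
    by simp
qed

theorem lemma3p1:
  fixes a m :: "real \<Rightarrow> real^3"
  assumes lines: "\<And>t. t \<in> {0..1} \<Longrightarrow> oriented_line (a t) (m t)"
    and cont_a: "continuous_on {0..1} a"
    and cont_m: "continuous_on {0..1} m"
    and same_line: "line_points (a 1) (m 1) = line_points (a 0) (m 0)"
    and opposite: "a 1 = - a 0"
  shows "\<exists>r\<in>{0..1}. \<exists>s\<in>{0..1}. a r \<bullet> a s = 0 \<and>
           line_points (a r) (m r) \<inter> line_points (a s) (m s) \<noteq> {}"
proof -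
  define F where "F z = line_pairing (a (fst z)) (m (fst z)) (a (snd z)) (m (snd z))" for z
  have "oriented_line (a 1) (- m 0)"
    using lines[of 0] opposite by (simp add: oriented_line_def)
  moreover have "line_points (a 1) (m 1) = line_points (a 1) (- m 0)"
    using same_line opposite line_points_uminus by metis
  ultimately have m1: "m 1 = - m 0"
    by (rule oriented_line_moment_unique)
  have "continuous_on ({0..1} \<times> {0..1}) F"
    unfolding F_def line_pairing_def
    by (intro continuous_intros continuous_on_compose2[OF cont_a] continuous_on_compose2[OF cont_m])
      auto
  moreover have "F (t, t) = 1" if "t \<in> {0..1}" for t
    using lines[OF that] by (simp add: F_def line_pairing_self)
  moreover have "F (t, 1) = - F (0, t)" if "t \<in> {0..1}" for t
    using opposite m1 line_pairing_uminus_right line_pairing_commute by (metis F_def fst_conv snd_conv)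
  ultimately have "\<exists>z \<in> {0..1} \<times> {0..1}. F z = 0"
    by (rule square_antisymmetric_boundary_has_zero)
  then obtain r s where rs: "r \<in> {0..1}" "s \<in> {0..1}"
      and "line_pairing (a r) (m r) (a s) (m s) = 0"
    by (auto simp: F_def)
  then show ?thesis
    using line_pairing_eq_0_imp_perpendicular_meet lines[OF rs(1)] lines[OF rs(2)] rs by blast
qed

end
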